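(* Let \[ g=\begin{pmatrix}A&C\\0&B\end{pmatrix}\in\mathrm{GL}_{n+m}(L), \] where $A\in\mathrm{GL}_n(L)$ and $B\in\mathrm{GL}_m(L)$ are monomial matrices in the sense that each row of $A$ and each column of $B$ contains exactly one nonzero entry. For $1\le i\le n$ let $\alpha_i$ be the valuation of the unique nonzero entry in row $i$ of $A$, and for $1\le j\le m$ let $\beta_j$ be the valuation of the unique nonzero entry in column $j$ of $B$. Order the combined list $\{\alpha_1,\dots,\alpha_n,\beta_1,\dots,\beta_m\}$ as $\gamma_1\le\gamma_2\le\cdots\le\gamma_{n+m}$. Then \[ g\in K\,\mathrm{diag}(t^{\gamma_1},\dots,t^{\gamma_{n+m}})\,K \] if and only if every entry $c_{ij}$ of the block $C$ satisfies $v(c_{ij})\ge\min\{\alpha_i,\beta_j\}$.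
   Context: $F$ is a non-Archimedean local field with uniformizer $t$; $L$ is the completion of the maximal unramified extension of $F$, with ring of integers $\mathcal O_L$ and normalized valuation $v$ ($v(t)=1$). $K=\mathrm{GL}_{n+m}(\mathcal O_L)$. *)

theory Defs
  imports "Jordan_Normal_Form.Matrix"
begin

text \<open>A normalized discrete valuation v on a field, with uniformizer t (v t = 1).
  The value v 0 is irrelevant (0 has valuation +infinity); all axioms only
  concern nonzero elements.\<close>
definition normalized_dval :: "('a::field \<Rightarrow> int) \<Rightarrow> 'a \<Rightarrow> bool" where
  "normalized_dval v t \<longleftrightarrow> t \<noteq> 0 \<and> v t = 1 \<and>
     (\<forall>x y. x \<noteq> 0 \<and> y \<noteq> 0 \<longrightarrow> v (x * y) = v x + v y) \<and>
     (\<forall>x y. x \<noteq> 0 \<and> y \<noteq> 0 \<and> x + y \<noteq> 0 \<longrightarrow> v (x + y) \<ge> min (v x) (v y))"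

definition integral :: "('a::field \<Rightarrow> int) \<Rightarrow> 'a \<Rightarrow> bool" where
  "integral v x \<longleftrightarrow> x = 0 \<or> v x \<ge> 0"

definition integral_mat :: "('a::field \<Rightarrow> int) \<Rightarrow> 'a mat \<Rightarrow> bool" where
  "integral_mat v M \<longleftrightarrow> (\<forall>i < dim_row M. \<forall>j < dim_col M. integral v (M $$ (i, j)))"

definition GL_int :: "('a::field \<Rightarrow> int) \<Rightarrow> nat \<Rightarrow> 'a mat set" where
  "GL_int v N = {k. k \<in> carrier_mat N N \<and> integral_mat v k \<and>
      (\<exists>k'. k' \<in> carrier_mat N N \<and> integral_mat v k' \<and> k * k' = 1\<^sub>m N \<and> k' * k = 1\<^sub>m N)}"

definition diag_pow :: "'a::field \<Rightarrow> int list \<Rightarrow> 'a mat" where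
  "diag_pow t gs = mat (length gs) (length gs) (\<lambda>(i, j). if i = j then t powi (gs ! i) else 0)"

definition row_monomial :: "'a::zero mat \<Rightarrow> bool" where
  "row_monomial A \<longleftrightarrow> (\<forall>i < dim_row A. \<exists>!j. j < dim_col A \<and> A $$ (i, j) \<noteq> 0)"

definition col_monomial :: "'a::zero mat \<Rightarrow> bool" where
  "col_monomial B \<longleftrightarrow> (\<forall>j < dim_col B. \<exists>!i. i < dim_row B \<and> B $$ (i, j) \<noteq> 0)"

definition row_entry :: "'a::zero mat \<Rightarrow> nat \<Rightarrow> 'a" where
  "row_entry A i = A $$ (i, THE j. j < dim_col A \<and> A $$ (i, j) \<noteq> 0)"

definition col_entry :: "'a::zero mat \<Rightarrow> nat \<Rightarrow> 'a" where
  "col_entry B j = B $$ (THE i. i < dim_row B \<and> B $$ (i, j) \<noteq> 0, j)"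

end

theory Submission
  imports Defs "Jordan_Normal_Form.Determinant"
begin

text \<open>
  Write \<open>K = GL_int v N\<close> and \<open>D\<^sub>\<gamma> = diag_pow t \<gamma>\<close>. Permutation matrices lie in \<open>K\<close>, so the
  double coset \<open>K D\<^sub>\<gamma> K\<close> does not depend on the order of \<open>\<gamma>\<close>, and since the monomial blocks
  factor as \<open>A = diag a * perm\<close> and \<open>B = perm * diag b\<close>, we may replace \<open>g\<close> by
  \<open>G = [[diag a, C], [0, diag b]]\<close> and \<open>\<gamma>\<close> by the unsorted list of valuations of \<open>a\<close> and \<open>b\<close>.

  If \<open>min (v a\<^sub>i) (v b\<^sub>j) \<le> v c\<^sub>i\<^sub>j\<close> for all entries, then \<open>C = diag a * Y + X * diag b\<close> with
  integral \<open>X\<close>, \<open>Y\<close>, and \<open>G = [[1, X], [0, 1]] * diag (a, b) * [[1, Y], [0, 1]] \<in> K D\<^sub>\<gamma> K\<close>.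

  Conversely let \<open>\<mu> = v c\<^sub>i\<^sub>j < v a\<^sub>i, v b\<^sub>j\<close> and let \<open>L\<close> be the set of indices whose exponent is
  at most \<open>\<mu>\<close>. If \<open>G = k\<^sub>1 D\<^sub>\<gamma> k\<^sub>2\<close> and \<open>H\<close> agrees with \<open>G\<close> on the rows \<open>L \<union> {i}\<close> and is
  integral elsewhere, then \<open>H k\<^sub>2\<^sup>-\<^sup>1\<close> agrees with \<open>k\<^sub>1 D\<^sub>\<gamma>\<close> on these rows, so every term of the
  Leibniz expansion of its determinant has valuation at least a sum of \<open>|L| + 1\<close> distinct
  exponents, hence at least \<open>\<mu> + 1 + \<Sum>\<^sub>L \<gamma>\<close>. Completing the rows \<open>L \<union> {i}\<close> of \<open>G\<close> by rows of a
  transposition matrix gives such an \<open>H\<close> whose determinant has valuation exactly \<open>\<mu> + \<Sum>\<^sub>L \<gamma>\<close>.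
\<close>

section \<open>Matrix identities\<close>

lemma index_mult_mat_sum:
  assumes "A \<in> carrier_mat n k" "B \<in> carrier_mat k l" "i < n" "j < l"
  shows "(A * B) $$ (i, j) = (\<Sum>r<k. A $$ (i, r) * B $$ (r, j))"
  using assms by (simp add: scalar_prod_def atLeast0LessThan)

lemma index_mult_mat_row_cong:
  assumes "A \<in> carrier_mat n k" "A' \<in> carrier_mat n' k" "B \<in> carrier_mat k l"
    and "i < n" "i < n'" "j < l" and "\<And>c. c < k \<Longrightarrow> A $$ (i, c) = A' $$ (i, c)"
  shows "(A * B) $$ (i, j) = (A' * B) $$ (i, j)"
  unfolding index_mult_mat_sum[OF assms(1,3,4,6)] index_mult_mat_sum[OF assms(2,3,5,6)]
  using assms(7) by simp

lemma assoc_mult_mat5: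
  assumes "A \<in> carrier_mat n n" "B \<in> carrier_mat n n" "C \<in> carrier_mat n n"
    "D \<in> carrier_mat n n" "E \<in> carrier_mat n n"
  shows "A * (B * C * D) * E = (A * B) * C * (D * E)"
proof -
  have "A * (B * C * D) * E = A * (B * C * D * E)"
    using assms by (intro assoc_mult_mat) auto
  also have "B * C * D * E = B * C * (D * E)"
    using assms by (intro assoc_mult_mat) auto
  also have "A * (B * C * (D * E)) = A * (B * C) * (D * E)"
    using assms by (intro assoc_mult_mat[symmetric]) auto
  also have "A * (B * C) = A * B * C"
    using assms by (intro assoc_mult_mat[symmetric]) auto
  finally show ?thesis .
qed

lemma transpose_mat_diag: "transpose_mat (mat_diag n f) = mat_diag n f"
  by (intro eq_matI) (auto simp: mat_diag_def)

lemma map_upt_add_eq_append: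
  "map f [0..<n + m] = map f [0..<n] @ map (\<lambda>j. f (n + j)) [0..<m]"
proof -
  have "[n..<n + m] = map (\<lambda>j. n + j) [0..<m]"
    using map_add_upt[of n m] by (simp add: add.commute)
  then show ?thesis by (simp add: upt_add_eq_append[of 0 n m])
qed

lemma four_block_mat_diag:
  "four_block_mat (mat_diag n a) (0\<^sub>m n m) (0\<^sub>m m n) (mat_diag m b)
     = mat_diag (n + m) (\<lambda>l. if l < n then a l else b (l - n))"
  by (intro eq_matI) (auto simp: mat_diag_def)

lemma unipotent_mult_block_diag:
  fixes D :: "'a::comm_ring_1 mat"
  assumes "D \<in> carrier_mat n n" "E \<in> carrier_mat m m" "X \<in> carrier_mat n m" "Y \<in> carrier_mat n m"
  shows "four_block_mat (1\<^sub>m n) X (0\<^sub>m m n) (1\<^sub>m m) * four_block_mat D (0\<^sub>m n m) (0\<^sub>m m n) E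
      * four_block_mat (1\<^sub>m n) Y (0\<^sub>m m n) (1\<^sub>m m)
    = four_block_mat D (D * Y + X * E) (0\<^sub>m m n) E"
  using assms
  by (simp add: mult_four_block_mat[OF one_carrier_mat _ zero_carrier_mat one_carrier_mat
        _ zero_carrier_mat zero_carrier_mat]
      mult_four_block_mat[OF _ _ zero_carrier_mat _ one_carrier_mat _ zero_carrier_mat one_carrier_mat])

lemma upper_block_mult_unipotent:
  fixes A :: "'a::semiring_1 mat"
  assumes A: "A \<in> carrier_mat n n" and C: "C \<in> carrier_mat n m" and B: "B \<in> carrier_mat m m"
    and Z: "Z \<in> carrier_mat n m"
  shows "four_block_mat A C (0\<^sub>m m n) B * four_block_mat (1\<^sub>m n) Z (0\<^sub>m m n) (1\<^sub>m m)
    = four_block_mat A (A * Z + C) (0\<^sub>m m n) B"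
  using assms by (simp add: mult_four_block_mat[OF A C zero_carrier_mat B
        one_carrier_mat Z zero_carrier_mat one_carrier_mat])

lemma block_diag_mult_upper_block:
  fixes A :: "'a::semiring_1 mat"
  assumes P: "P \<in> carrier_mat m m" and Q: "Q \<in> carrier_mat n n"
    and A: "A \<in> carrier_mat n n" and C: "C \<in> carrier_mat n m" and B: "B \<in> carrier_mat m m"
  shows "four_block_mat (1\<^sub>m n) (0\<^sub>m n m) (0\<^sub>m m n) P * four_block_mat A C (0\<^sub>m m n) B
      * four_block_mat Q (0\<^sub>m n m) (0\<^sub>m m n) (1\<^sub>m m)
    = four_block_mat (A * Q) C (0\<^sub>m m n) (P * B)"
proof -
  have "four_block_mat (1\<^sub>m n) (0\<^sub>m n m) (0\<^sub>m m n) P * four_block_mat A C (0\<^sub>m m n) B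
      = four_block_mat A C (0\<^sub>m m n) (P * B)"
    using assms by (simp add: mult_four_block_mat[OF one_carrier_mat zero_carrier_mat zero_carrier_mat P
          A C zero_carrier_mat B])
  also have "\<dots> * four_block_mat Q (0\<^sub>m n m) (0\<^sub>m m n) (1\<^sub>m m) = four_block_mat (A * Q) C (0\<^sub>m m n) (P * B)"
    using assms by (simp add: mult_four_block_mat[OF A C zero_carrier_mat mult_carrier_mat[OF P B]
          Q zero_carrier_mat zero_carrier_mat one_carrier_mat])
  finally show ?thesis .
qed

section \<open>Permutation matrices\<close>

definition perm_mat :: "nat \<Rightarrow> (nat \<Rightarrow> nat) \<Rightarrow> 'a::{zero,one} mat" where
  "perm_mat n p = mat n n (\<lambda>(i, j). if j = p i then 1 else 0)"

lemma perm_mat_carrier [simp]: "perm_mat n p \<in> carrier_mat n n"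
  and perm_mat_dim [simp]: "dim_row (perm_mat n p) = n" "dim_col (perm_mat n p) = n"
  by (simp_all add: perm_mat_def)

lemma perm_mat_mult_left:
  fixes X :: "'a::semiring_1 mat"
  assumes p: "p permutes {..<n}" and X: "X \<in> carrier_mat n k"
  shows "perm_mat n p * X = mat n k (\<lambda>(i, j). X $$ (p i, j))"
proof (rule eq_matI, insert X, auto simp: perm_mat_def scalar_prod_def, goal_cases)
  case (1 i j)
  then have "p i < n" using permutes_in_image[OF p] by simp
  then show ?case by (subst sum.remove[of _ "p i"]) auto
qed

lemma perm_mat_mult_right:
  fixes X :: "'a::semiring_1 mat"
  assumes p: "p permutes {..<n}" and X: "X \<in> carrier_mat k n"
  shows "X * perm_mat n p = mat k n (\<lambda>(i, j). X $$ (i, Hilbert_Choice.inv p j))"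
proof (rule eq_matI, insert X, auto simp: perm_mat_def scalar_prod_def, goal_cases)
  case (1 i j)
  have "j = p l \<longleftrightarrow> l = Hilbert_Choice.inv p j" for l
    using permutes_inverses[OF p] by metis
  moreover have "Hilbert_Choice.inv p j < n"
    using permutes_in_image[OF permutes_inv[OF p]] 1 by simp
  ultimately show ?case by (subst sum.remove[of _ "Hilbert_Choice.inv p j"]) auto
qed

lemma perm_mat_inverse:
  assumes p: "p permutes {..<n}"
  shows "perm_mat n p * perm_mat n (Hilbert_Choice.inv p) = (1\<^sub>m n :: 'a::semiring_1 mat)"
    and "perm_mat n (Hilbert_Choice.inv p) * perm_mat n p = (1\<^sub>m n :: 'a::semiring_1 mat)"
proof -
  note p' = permutes_inv[OF p]
  show "perm_mat n p * perm_mat n (Hilbert_Choice.inv p) = (1\<^sub>m n :: 'a mat)"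
    unfolding perm_mat_mult_left[OF p perm_mat_carrier]
    using permutes_inverses[OF p] permutes_in_image[OF p] by (intro eq_matI) (auto simp: perm_mat_def)
  show "perm_mat n (Hilbert_Choice.inv p) * perm_mat n p = (1\<^sub>m n :: 'a mat)"
    unfolding perm_mat_mult_left[OF p' perm_mat_carrier]
    using permutes_inverses[OF p] permutes_in_image[OF p'] by (intro eq_matI) (auto simp: perm_mat_def)
qed

lemma det_perm_mat:
  assumes p: "p permutes {..<n}"
  shows "det (perm_mat n p :: 'a::comm_ring_1 mat) = signof p"
proof -
  have "perm_mat n p = mat n n (\<lambda>(i, j). (1\<^sub>m n :: 'a mat) $$ (p i, j))"
    using permutes_in_image[OF p] by (intro eq_matI) (auto simp: perm_mat_def)
  then show ?thesis
    using det_permute_rows[OF one_carrier_mat, of p n] p by (simp add: atLeast0LessThan)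
qed

lemma transpose_perm_mat:
  assumes "p permutes {..<n}"
  shows "transpose_mat (perm_mat n p) = perm_mat n (Hilbert_Choice.inv p)"
  using permutes_inverses[OF assms] by (intro eq_matI) (auto simp: perm_mat_def)

section \<open>Monomial matrices\<close>

lemma invertible_mat_inverse:
  assumes A: "A \<in> carrier_mat n n" and "invertible_mat A"
  obtains B where "B \<in> carrier_mat n n" "A * B = 1\<^sub>m n" "B * A = 1\<^sub>m n"
proof -
  obtain B where AB: "A * B = 1\<^sub>m n" and BA: "B * A = 1\<^sub>m (dim_row B)"
    using assms unfolding invertible_mat_def inverts_mat_def by auto
  have "dim_col B = n" using arg_cong[OF AB, of dim_col] by simp
  moreover have "dim_row B = n" using arg_cong[OF BA, of dim_col] A by simp
  ultimately show ?thesis using that AB BA by auto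
qed

lemma invertible_mat_col_nonzero:
  assumes A: "A \<in> carrier_mat n n" "invertible_mat A" and j: "j < n"
  shows "\<exists>i<n. A $$ (i, j) \<noteq> 0"
proof (rule ccontr)
  obtain B where B: "B \<in> carrier_mat n n" "B * A = 1\<^sub>m n"
    using invertible_mat_inverse[OF A] by blast
  assume "\<not> (\<exists>i<n. A $$ (i, j) \<noteq> 0)"
  then have "(B * A) $$ (j, j) = 0"
    using index_mult_mat_sum[OF B(1) A(1) j j] by simp
  then show False using B j by simp
qed

lemma invertible_mat_row_nonzero:
  assumes A: "A \<in> carrier_mat n n" "invertible_mat A" and i: "i < n"
  shows "\<exists>j<n. A $$ (i, j) \<noteq> 0"
proof (rule ccontr)
  obtain B where B: "B \<in> carrier_mat n n" "A * B = 1\<^sub>m n"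
    using invertible_mat_inverse[OF A] by blast
  assume "\<not> (\<exists>j<n. A $$ (i, j) \<noteq> 0)"
  then have "(A * B) $$ (i, i) = 0"
    using index_mult_mat_sum[OF A(1) B(1) i i] by simp
  then show False using B i by simp
qed

lemma row_entry_nonzero:
  assumes "row_monomial A" "i < dim_row A"
  shows "row_entry A i \<noteq> 0"
proof -
  have "\<exists>!j. j < dim_col A \<and> A $$ (i, j) \<noteq> 0"
    using assms unfolding row_monomial_def by blast
  from theI'[OF this] show ?thesis unfolding row_entry_def by blast
qed

lemma col_entry_nonzero:
  assumes "col_monomial B" "j < dim_col B"
  shows "col_entry B j \<noteq> 0"
proof -
  have "\<exists>!i. i < dim_row B \<and> B $$ (i, j) \<noteq> 0"
    using assms unfolding col_monomial_def by blast
  from theI'[OF this] show ?thesis unfolding col_entry_def by blast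
qed

lemma row_monomial_factorization:
  fixes A :: "'a::semiring_1 mat"
  assumes A: "A \<in> carrier_mat n n" "row_monomial A"
    and cols: "\<And>j. j < n \<Longrightarrow> \<exists>i<n. A $$ (i, j) \<noteq> 0"
  obtains p where "p permutes {..<n}" "A = mat_diag n (row_entry A) * perm_mat n p"
proof -
  define p where "p i = (if i < n then THE j. j < n \<and> A $$ (i, j) \<noteq> 0 else i)" for i
  have unique: "\<exists>!j. j < n \<and> A $$ (i, j) \<noteq> 0" if "i < n" for i
    using A that unfolding row_monomial_def by auto
  have p: "p i < n" "A $$ (i, p i) \<noteq> 0" "row_entry A i = A $$ (i, p i)" if "i < n" for i
    using theI'[OF unique[OF that]] A that by (auto simp: p_def row_entry_def)
  have p_unique: "j = p i" if "i < n" "j < n" "A $$ (i, j) \<noteq> 0" for i j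
    using unique p that by blast
  have "{..<n} \<subseteq> p ` {..<n}"
    using cols p_unique by blast
  moreover have "p ` {..<n} \<subseteq> {..<n}" using p(1) by auto
  ultimately have "bij_betw p {..<n} {..<n}"
    by (simp add: bij_betw_def finite_surj_inj subset_antisym)
  then have perm: "p permutes {..<n}"
    by (rule bij_imp_permutes) (simp add: p_def)
  have "A = mat_diag n (row_entry A) * perm_mat n p"
  proof (rule eq_matI)
    fix i j assume "i < dim_row (mat_diag n (row_entry A) * perm_mat n p)"
      "j < dim_col (mat_diag n (row_entry A) * perm_mat n p)"
    then have ij: "i < n" "j < n" by (auto simp: mat_diag_def)
    have "A $$ (i, j) = (if j = p i then row_entry A i else 0)"
      using p(3)[OF ij(1)] p_unique[OF ij] by (cases "j = p i") auto
    then show "A $$ (i, j) = (mat_diag n (row_entry A) * perm_mat n p) $$ (i, j)"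
      unfolding mat_diag_mult_left[OF perm_mat_carrier] using ij by (simp add: perm_mat_def)
  qed (use A in \<open>auto simp: mat_diag_def\<close>)
  with perm show ?thesis using that by blast
qed

lemma transpose_entry_nonzero_iff:
  "i < dim_col B \<Longrightarrow> (j < dim_row B \<and> transpose_mat B $$ (i, j) \<noteq> 0) \<longleftrightarrow> (j < dim_row B \<and> B $$ (j, i) \<noteq> 0)"
  by auto

lemma row_monomial_transpose: "col_monomial B \<Longrightarrow> row_monomial (transpose_mat B)"
  unfolding row_monomial_def col_monomial_def by (simp add: transpose_entry_nonzero_iff)

lemma row_entry_transpose:
  assumes "col_monomial B" "j < dim_col B"
  shows "row_entry (transpose_mat B) j = col_entry B j"
proof -
  have "\<exists>!i. i < dim_row B \<and> B $$ (i, j) \<noteq> 0"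
    using assms unfolding col_monomial_def by blast
  from theI'[OF this] show ?thesis
    using assms(2) by (simp add: row_entry_def col_entry_def transpose_entry_nonzero_iff)
qed

lemma col_monomial_factorization:
  fixes B :: "'a::comm_semiring_1 mat"
  assumes B: "B \<in> carrier_mat n n" "col_monomial B"
    and rows: "\<And>i. i < n \<Longrightarrow> \<exists>j<n. B $$ (i, j) \<noteq> 0"
  obtains p where "p permutes {..<n}" "B = perm_mat n p * mat_diag n (col_entry B)"
proof -
  have cols: "\<exists>i<n. transpose_mat B $$ (i, j) \<noteq> 0" if "j < n" for j
    using rows[OF that] B that by auto
  obtain q where q: "q permutes {..<n}"
    and Bt: "transpose_mat B = mat_diag n (row_entry (transpose_mat B)) * perm_mat n q"
    by (rule row_monomial_factorization[of "transpose_mat B" n])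
      (use B row_monomial_transpose cols in auto)
  have diag: "mat_diag n (row_entry (transpose_mat B)) = mat_diag n (col_entry B)"
    using B row_entry_transpose by (intro eq_matI) (auto simp: mat_diag_def)
  have "B = transpose_mat (transpose_mat B)" by simp
  also have "transpose_mat B = mat_diag n (col_entry B) * perm_mat n q"
    using Bt unfolding diag .
  also have "transpose_mat \<dots> = perm_mat n (Hilbert_Choice.inv q) * mat_diag n (col_entry B)"
    by (simp only: transpose_mult[OF mat_diag_dim perm_mat_carrier] transpose_perm_mat[OF q]
        transpose_mat_diag)
  finally show ?thesis by (rule that[OF permutes_inv[OF q]])
qed

section \<open>Sums of exponents\<close>

lemma sum_threshold_bound:
  fixes w :: "'b \<Rightarrow> int"
  assumes U: "finite U" and T: "T \<subseteq> U" and card: "card T = card {l \<in> U. w l \<le> \<mu>} + 1"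
  shows "(\<Sum>l \<in> {l \<in> U. w l \<le> \<mu>}. w l) + \<mu> + 1 \<le> (\<Sum>l\<in>T. w l)"
proof -
  define L where "L = {l \<in> U. w l \<le> \<mu>}"
  define k where "k = card (L - T)"
  have fin: "finite T" "finite L" using U T finite_subset unfolding L_def by auto
  have "card (T - L) = k + 1"
    using card card_Int_Diff[OF fin(1), of L] card_Int_Diff[OF fin(2), of T]
    unfolding L_def[symmetric] k_def by (simp add: Int_commute)
  then have above: "int (k + 1) * (\<mu> + 1) \<le> (\<Sum>l\<in>T - L. w l)"
    using sum_bounded_below[of "T - L" "\<mu> + 1" w] T unfolding L_def by fastforce
  have below: "(\<Sum>l\<in>L - T. w l) \<le> int k * \<mu>"
    using sum_bounded_above[of "L - T" w \<mu>] unfolding L_def k_def by fastforce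
  have "(\<Sum>l\<in>T. w l) = (\<Sum>l\<in>T \<inter> L. w l) + (\<Sum>l\<in>T - L. w l)"
    "(\<Sum>l\<in>L. w l) = (\<Sum>l\<in>T \<inter> L. w l) + (\<Sum>l\<in>L - T. w l)"
    using sum.Int_Diff[OF fin(1), of w L] sum.Int_Diff[OF fin(2), of w T]
    by (simp_all add: Int_commute)
  moreover have "int (k + 1) * (\<mu> + 1) = int k * \<mu> + int k + \<mu> + 1"
    by (simp add: algebra_simps)
  ultimately show ?thesis
    using above below unfolding L_def[symmetric] by linarith
qed

lemma permutation_sum_lower_bound:
  fixes e w :: "nat \<Rightarrow> int"
  assumes p: "p permutes {..<N}" and R: "R \<subseteq> {..<N}"
    and on_R: "\<And>r. r \<in> R \<Longrightarrow> w (p r) \<le> e r"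
    and off_R: "\<And>r. r < N \<Longrightarrow> r \<notin> R \<Longrightarrow> 0 \<le> e r"
    and weight: "\<And>T. T \<subseteq> {..<N} \<Longrightarrow> card T = card R \<Longrightarrow> b \<le> (\<Sum>l\<in>T. w l)"
  shows "b \<le> (\<Sum>r<N. e r)"
proof -
  have "inj_on p R" by (rule inj_on_subset[OF permutes_inj[OF p] subset_UNIV])
  moreover have "p ` R \<subseteq> {..<N}" using R permutes_in_image[OF p] by auto
  ultimately have "b \<le> (\<Sum>r\<in>R. w (p r))"
    using weight[of "p ` R"] by (simp add: sum.reindex card_image)
  also have "\<dots> \<le> (\<Sum>r\<in>R. e r)" using on_R by (rule sum_mono)
  also have "\<dots> \<le> (\<Sum>r\<in>R. e r) + (\<Sum>r\<in>{..<N} - R. e r)"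
    using off_R sum_nonneg[of "{..<N} - R" e] by simp
  also have "\<dots> = (\<Sum>r<N. e r)"
    using R by (simp add: sum.subset_diff[of R "{..<N}"])
  finally show ?thesis .
qed

section \<open>Valuations, the group \<open>K\<close> and its double cosets\<close>

definition double_coset :: "('a::field \<Rightarrow> int) \<Rightarrow> 'a \<Rightarrow> int list \<Rightarrow> 'a mat set" where
  "double_coset v t \<gamma> = {k1 * diag_pow t \<gamma> * k2 | k1 k2.
     k1 \<in> GL_int v (length \<gamma>) \<and> k2 \<in> GL_int v (length \<gamma>)}"

lemma diag_pow_mat_diag: "diag_pow t \<gamma> = mat_diag (length \<gamma>) (\<lambda>i. t powi (\<gamma> ! i))"
  by (rule eq_matI) (auto simp: diag_pow_def mat_diag_def)

lemma diag_pow_carrier [simp]: "diag_pow t \<gamma> \<in> carrier_mat (length \<gamma>) (length \<gamma>)"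
  by (simp add: diag_pow_def)

locale normalized_discrete_valuation =
  fixes v :: "'a::field \<Rightarrow> int" and t :: 'a
  assumes normalized: "normalized_dval v t"
begin

lemma v_mult: "x \<noteq> 0 \<Longrightarrow> y \<noteq> 0 \<Longrightarrow> v (x * y) = v x + v y"
  using normalized unfolding normalized_dval_def by blast

lemma v_add: "x \<noteq> 0 \<Longrightarrow> y \<noteq> 0 \<Longrightarrow> x + y \<noteq> 0 \<Longrightarrow> min (v x) (v y) \<le> v (x + y)"
  using normalized unfolding normalized_dval_def by blast

lemma t_nonzero: "t \<noteq> 0" and v_t: "v t = 1"
  using normalized unfolding normalized_dval_def by auto

lemma v_one: "v 1 = 0"
  using v_mult[of 1 1] by simp

lemma v_inverse: "x \<noteq> 0 \<Longrightarrow> v (inverse x) = - v x"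
  using v_mult[of x "inverse x"] v_one by simp

lemma v_divide: "x \<noteq> 0 \<Longrightarrow> y \<noteq> 0 \<Longrightarrow> v (x / y) = v x - v y"
  by (simp add: divide_inverse v_mult v_inverse)

lemma v_minus_one: "v (- 1) = 0"
  using v_mult[of "- 1" "- 1"] v_one by simp

lemma v_uminus: "v (- x) = v x"
  using v_mult[of "- 1" x] v_minus_one by (cases "x = 0") auto

lemma v_power: "v (t ^ k) = int k"
  by (induction k) (simp_all add: v_one v_mult t_nonzero v_t)

lemma v_power_int: "v (t powi k) = k"
  by (cases "0 \<le> k")
    (simp_all add: power_int_def v_power power_inverse v_inverse t_nonzero)

lemma v_signof: "v (signof p) = 0"
  by (simp add: sign_def v_one v_minus_one)

lemma v_prod:
  assumes "finite S" "\<And>s. s \<in> S \<Longrightarrow> f s \<noteq> 0"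
  shows "v (prod f S) = (\<Sum>s\<in>S. v (f s))"
  using assms by (induction S rule: finite_induct) (auto simp: v_one v_mult)

lemma v_sum_lower_bound:
  assumes "finite S" and "\<And>s. s \<in> S \<Longrightarrow> f s \<noteq> 0 \<Longrightarrow> b \<le> v (f s)" and "sum f S \<noteq> 0"
  shows "b \<le> v (sum f S)"
  using assms
proof (induction S rule: finite_induct)
  case (insert x F)
  show ?case
  proof (cases "f x = 0 \<or> sum f F = 0")
    case True
    then show ?thesis using insert by auto
  next
    case False
    then have "b \<le> v (f x)" "b \<le> v (sum f F)" using insert by auto
    then show ?thesis using v_add[of "f x" "sum f F"] False insert by force
  qed
qed simp

lemma integral_zero [simp]: "integral v 0" and integral_one [simp]: "integral v 1"
  by (auto simp: integral_def v_one)

lemma integral_mult: "integral v x \<Longrightarrow> integral v y \<Longrightarrow> integral v (x * y)"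
  unfolding integral_def by (cases "x = 0"; cases "y = 0") (auto simp: v_mult)

lemma integral_add: "integral v x \<Longrightarrow> integral v y \<Longrightarrow> integral v (x + y)"
  unfolding integral_def using v_add[of x y] by force

lemma integral_uminus: "integral v x \<Longrightarrow> integral v (- x)"
  by (auto simp: integral_def v_uminus)

lemma integral_sum: "(\<And>s. s \<in> S \<Longrightarrow> integral v (f s)) \<Longrightarrow> integral v (sum f S)"
  by (induction S rule: infinite_finite_induct) (auto intro: integral_add)

lemma integral_prod: "(\<And>s. s \<in> S \<Longrightarrow> integral v (f s)) \<Longrightarrow> integral v (prod f S)"
  by (induction S rule: infinite_finite_induct) (auto intro: integral_mult)

lemma integral_mat_mult:
  assumes "A \<in> carrier_mat n k" "B \<in> carrier_mat k l" "integral_mat v A" "integral_mat v B"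
  shows "integral_mat v (A * B)"
  using assms unfolding integral_mat_def
  by (auto simp: scalar_prod_def intro!: integral_sum integral_mult)

lemma integral_det:
  assumes "M \<in> carrier_mat n n" "integral_mat v M"
  shows "integral v (det M)"
  unfolding det_def'[OF assms(1)] using assms permutes_in_image
  by (fastforce simp: integral_mat_def integral_def v_signof
      intro!: integral_sum integral_mult integral_prod)

lemma GL_intI:
  assumes "k \<in> carrier_mat n n" "k' \<in> carrier_mat n n" "integral_mat v k" "integral_mat v k'"
    and "k * k' = 1\<^sub>m n" "k' * k = 1\<^sub>m n"
  shows "k \<in> GL_int v n"
  using assms unfolding GL_int_def by blast

lemma GL_int_carrier: "k \<in> GL_int v n \<Longrightarrow> k \<in> carrier_mat n n"
  and GL_int_integral: "k \<in> GL_int v n \<Longrightarrow> integral_mat v k"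
  unfolding GL_int_def by blast+

lemma GL_int_inverse:
  assumes "k \<in> GL_int v n"
  obtains k' where "k' \<in> GL_int v n" "k * k' = 1\<^sub>m n" "k' * k = 1\<^sub>m n"
  using assms unfolding GL_int_def by blast

lemma GL_int_mult:
  assumes k: "k \<in> GL_int v n" and l: "l \<in> GL_int v n"
  shows "k * l \<in> GL_int v n"
proof -
  obtain k' where k': "k' \<in> GL_int v n" "k * k' = 1\<^sub>m n" "k' * k = 1\<^sub>m n"
    using GL_int_inverse[OF k] .
  obtain l' where l': "l' \<in> GL_int v n" "l * l' = 1\<^sub>m n" "l' * l = 1\<^sub>m n"
    using GL_int_inverse[OF l] .
  note carrier = GL_int_carrier[OF k] GL_int_carrier[OF l]
    GL_int_carrier[OF k'(1)] GL_int_carrier[OF l'(1)]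
  have "k * l * (l' * k') = k * (l * l') * k'" "l' * k' * (k * l) = l' * (k' * k) * l"
    using carrier by (simp_all add: assoc_mult_mat[of _ n n _ n _ n])
  then have "k * l * (l' * k') = 1\<^sub>m n" "l' * k' * (k * l) = 1\<^sub>m n"
    using carrier k' l' by simp_all
  then show ?thesis
    using carrier k l k' l' by (intro GL_intI) (auto intro: integral_mat_mult GL_int_integral)
qed

lemma one_mat_GL_int: "1\<^sub>m n \<in> GL_int v n"
  by (rule GL_intI[of _ _ "1\<^sub>m n"]) (auto simp: integral_mat_def)

lemma GL_int_det:
  assumes "k \<in> GL_int v n"
  shows "det k \<noteq> 0" and "v (det k) = 0"
proof -
  obtain k' where k': "k' \<in> GL_int v n" "k * k' = 1\<^sub>m n"
    using GL_int_inverse[OF assms] by blast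
  have "det k * det k' = 1"
    using det_mult[OF GL_int_carrier[OF assms] GL_int_carrier[OF k'(1)]] k' by simp
  then have "det k \<noteq> 0" "det k' \<noteq> 0" by auto
  moreover from this have "v (det k) + v (det k') = 0"
    using \<open>det k * det k' = 1\<close> v_mult v_one by metis
  moreover have "integral v (det k)" "integral v (det k')"
    using integral_det GL_int_carrier GL_int_integral assms k'(1) by blast+
  ultimately show "det k \<noteq> 0" "v (det k) = 0" by (auto simp: integral_def)
qed

lemma perm_mat_GL_int: "p permutes {..<n} \<Longrightarrow> perm_mat n p \<in> GL_int v n"
  by (rule GL_intI[OF _ _ _ _ perm_mat_inverse]) (auto simp: integral_mat_def perm_mat_def)

lemma mat_diag_GL_int:
  assumes "\<And>i. i < n \<Longrightarrow> u i \<noteq> 0 \<and> v (u i) = 0"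
  shows "mat_diag n u \<in> GL_int v n"
proof (rule GL_intI[of _ _ "mat_diag n (\<lambda>i. inverse (u i))"])
  have "mat_diag n (\<lambda>i. u i * inverse (u i)) = 1\<^sub>m n"
       "mat_diag n (\<lambda>i. inverse (u i) * u i) = 1\<^sub>m n"
    using assms by (auto intro!: eq_matI simp: mat_diag_def)
  then show "mat_diag n u * mat_diag n (\<lambda>i. inverse (u i)) = 1\<^sub>m n"
    "mat_diag n (\<lambda>i. inverse (u i)) * mat_diag n u = 1\<^sub>m n"
    by simp_all
qed (use assms in \<open>auto simp: integral_mat_def mat_diag_def integral_def v_inverse\<close>)

lemma block_diag_GL_int:
  assumes k: "k \<in> GL_int v n" and l: "l \<in> GL_int v m"
  shows "four_block_mat k (0\<^sub>m n m) (0\<^sub>m m n) l \<in> GL_int v (n + m)"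
proof -
  obtain k' where k': "k' \<in> GL_int v n" "k * k' = 1\<^sub>m n" "k' * k = 1\<^sub>m n"
    using GL_int_inverse[OF k] .
  obtain l' where l': "l' \<in> GL_int v m" "l * l' = 1\<^sub>m m" "l' * l = 1\<^sub>m m"
    using GL_int_inverse[OF l] .
  note carrier = GL_int_carrier[OF k] GL_int_carrier[OF l]
    GL_int_carrier[OF k'(1)] GL_int_carrier[OF l'(1)]
  show ?thesis
  proof (rule GL_intI[of _ _ "four_block_mat k' (0\<^sub>m n m) (0\<^sub>m m n) l'"])
    show "four_block_mat k (0\<^sub>m n m) (0\<^sub>m m n) l * four_block_mat k' (0\<^sub>m n m) (0\<^sub>m m n) l' = 1\<^sub>m (n + m)"
      "four_block_mat k' (0\<^sub>m n m) (0\<^sub>m m n) l' * four_block_mat k (0\<^sub>m n m) (0\<^sub>m m n) l = 1\<^sub>m (n + m)"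
      using carrier k' l'
      by (simp_all add: mult_four_block_mat[OF _ zero_carrier_mat zero_carrier_mat _ _
            zero_carrier_mat zero_carrier_mat])
    show "integral_mat v (four_block_mat k (0\<^sub>m n m) (0\<^sub>m m n) l)"
      "integral_mat v (four_block_mat k' (0\<^sub>m n m) (0\<^sub>m m n) l')"
      using carrier GL_int_integral[OF k] GL_int_integral[OF l]
        GL_int_integral[OF k'(1)] GL_int_integral[OF l'(1)]
      by (auto simp: integral_mat_def)
  qed (use carrier in auto)
qed

lemma unipotent_GL_int:
  assumes Z: "Z \<in> carrier_mat n m" and "integral_mat v Z"
  shows "four_block_mat (1\<^sub>m n) Z (0\<^sub>m m n) (1\<^sub>m m) \<in> GL_int v (n + m)"
proof (rule GL_intI[of _ _ "four_block_mat (1\<^sub>m n) (- Z) (0\<^sub>m m n) (1\<^sub>m m)"])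
  have "Z + - Z = 0\<^sub>m n m" "- Z + Z = 0\<^sub>m n m" "- 0\<^sub>m m m = (0\<^sub>m m m :: 'a mat)"
    using Z by (auto intro!: eq_matI)
  then show "four_block_mat (1\<^sub>m n) Z (0\<^sub>m m n) (1\<^sub>m m) * four_block_mat (1\<^sub>m n) (- Z) (0\<^sub>m m n) (1\<^sub>m m) = 1\<^sub>m (n + m)"
    "four_block_mat (1\<^sub>m n) (- Z) (0\<^sub>m m n) (1\<^sub>m m) * four_block_mat (1\<^sub>m n) Z (0\<^sub>m m n) (1\<^sub>m m) = 1\<^sub>m (n + m)"
    using Z by (simp_all add: mult_four_block_mat[OF one_carrier_mat _ zero_carrier_mat
          one_carrier_mat one_carrier_mat _ zero_carrier_mat one_carrier_mat])
qed (use assms in \<open>auto simp: integral_mat_def intro: integral_uminus\<close>)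

lemma double_coset_mult:
  assumes g: "g \<in> double_coset v t \<gamma>"
    and P: "P \<in> GL_int v (length \<gamma>)" and Q: "Q \<in> GL_int v (length \<gamma>)"
  shows "P * g * Q \<in> double_coset v t \<gamma>"
proof -
  let ?N = "length \<gamma>"
  obtain k1 k2 where k: "k1 \<in> GL_int v ?N" "k2 \<in> GL_int v ?N" "g = k1 * diag_pow t \<gamma> * k2"
    using g unfolding double_coset_def by blast
  have "P * g * Q = (P * k1) * diag_pow t \<gamma> * (k2 * Q)"
    unfolding k(3)
    using GL_int_carrier[OF P] GL_int_carrier[OF Q] GL_int_carrier[OF k(1)] GL_int_carrier[OF k(2)]
    by (intro assoc_mult_mat5) auto
  then show ?thesis
    unfolding double_coset_def using GL_int_mult P Q k by blast
qed

lemma double_coset_mult_iff: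
  assumes P: "P \<in> GL_int v (length \<gamma>)" and Q: "Q \<in> GL_int v (length \<gamma>)"
    and g: "g \<in> carrier_mat (length \<gamma>) (length \<gamma>)"
  shows "P * g * Q \<in> double_coset v t \<gamma> \<longleftrightarrow> g \<in> double_coset v t \<gamma>"
proof
  let ?N = "length \<gamma>"
  obtain P' where P': "P' \<in> GL_int v ?N" "P' * P = 1\<^sub>m ?N" using GL_int_inverse[OF P] by blast
  obtain Q' where Q': "Q' \<in> GL_int v ?N" "Q * Q' = 1\<^sub>m ?N" using GL_int_inverse[OF Q] by blast
  have "P' * (P * g * Q) * Q' = (P' * P) * g * (Q * Q')"
    using g GL_int_carrier[OF P] GL_int_carrier[OF Q] GL_int_carrier[OF P'(1)] GL_int_carrier[OF Q'(1)]
    by (intro assoc_mult_mat5) auto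
  also have "\<dots> = g" using P' Q' g by simp
  finally show "g \<in> double_coset v t \<gamma>" if "P * g * Q \<in> double_coset v t \<gamma>"
    using double_coset_mult[OF that P'(1) Q'(1)] by simp
qed (use double_coset_mult P Q in blast)

lemma diag_pow_mem_double_coset: "diag_pow t \<gamma> \<in> double_coset v t \<gamma>"
proof -
  have "diag_pow t \<gamma> = 1\<^sub>m (length \<gamma>) * diag_pow t \<gamma> * 1\<^sub>m (length \<gamma>)"
    by (simp only: left_mult_one_mat[OF diag_pow_carrier] right_mult_one_mat[OF diag_pow_carrier])
  then show ?thesis
    unfolding double_coset_def using one_mat_GL_int by blast
qed

lemma double_coset_permute_list:
  assumes p: "p permutes {..<length \<gamma>}"
  shows "double_coset v t (permute_list p \<gamma>) \<subseteq> double_coset v t \<gamma>"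
proof
  let ?N = "length \<gamma>"
  let ?p' = "Hilbert_Choice.inv p"
  have "perm_mat ?N p * diag_pow t \<gamma> * perm_mat ?N ?p'
      = mat ?N ?N (\<lambda>(i, j). diag_pow t \<gamma> $$ (p i, j)) * perm_mat ?N ?p'"
    by (simp add: perm_mat_mult_left[OF p diag_pow_carrier])
  also have "\<dots> = mat ?N ?N (\<lambda>(i, j). diag_pow t \<gamma> $$ (p i, p j))"
    unfolding perm_mat_mult_right[OF permutes_inv[OF p] mat_carrier] inv_inv_eq[OF permutes_bij[OF p]]
    using permutes_in_image[OF p] by (intro eq_matI) auto
  also have "\<dots> = diag_pow t (permute_list p \<gamma>)"
    using permutes_in_image[OF p] permutes_inj[OF p]
    by (intro eq_matI) (auto simp: diag_pow_def permute_list_nth[OF p] dest: injD)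
  finally have "diag_pow t (permute_list p \<gamma>) = perm_mat ?N p * diag_pow t \<gamma> * perm_mat ?N ?p'" ..
  then have diag: "diag_pow t (permute_list p \<gamma>) \<in> double_coset v t \<gamma>"
    using p by (simp add: double_coset_mult diag_pow_mem_double_coset perm_mat_GL_int permutes_inv)
  fix g assume "g \<in> double_coset v t (permute_list p \<gamma>)"
  then obtain k1 k2 where "k1 \<in> GL_int v ?N" "k2 \<in> GL_int v ?N"
    "g = k1 * diag_pow t (permute_list p \<gamma>) * k2"
    unfolding double_coset_def by auto
  then show "g \<in> double_coset v t \<gamma>" using double_coset_mult[OF diag] by simp
qed

lemma double_coset_mset_eq:
  assumes "mset \<gamma> = mset \<gamma>'"
  shows "double_coset v t \<gamma> = double_coset v t \<gamma>'"
proof -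
  obtain p where p: "p permutes {..<length \<gamma>'}" "permute_list p \<gamma>' = \<gamma>"
    using mset_eq_permutation[OF assms] by blast
  obtain q where q: "q permutes {..<length \<gamma>}" "permute_list q \<gamma> = \<gamma>'"
    using mset_eq_permutation[OF assms[symmetric]] by blast
  show ?thesis
    using double_coset_permute_list[OF p(1)] double_coset_permute_list[OF q(1)]
    unfolding p(2) q(2) by (rule subset_antisym)
qed

lemma mat_diag_mem_double_coset:
  assumes "\<And>i. i < n \<Longrightarrow> x i \<noteq> 0"
  shows "mat_diag n x \<in> double_coset v t (map (\<lambda>i. v (x i)) [0..<n])"
proof -
  define \<gamma> where "\<gamma> = map (\<lambda>i. v (x i)) [0..<n]"
  define u where "u i = x i / t powi v (x i)" for i
  have diag: "diag_pow t \<gamma> = mat_diag n (\<lambda>i. t powi v (x i))"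
    unfolding diag_pow_mat_diag \<gamma>_def by (rule eq_matI) (auto simp: mat_diag_def)
  have "mat_diag n x = mat_diag n u * diag_pow t \<gamma> * 1\<^sub>m n"
    unfolding diag mat_diag_diag right_mult_one_mat[OF mat_diag_dim]
    by (auto intro!: eq_matI simp: u_def mat_diag_def t_nonzero)
  moreover have "mat_diag n u \<in> GL_int v n"
    using assms by (intro mat_diag_GL_int) (simp add: u_def v_divide v_power_int t_nonzero)
  moreover have "length \<gamma> = n" by (simp add: \<gamma>_def)
  ultimately show ?thesis
    unfolding double_coset_def \<gamma>_def[symmetric] using one_mat_GL_int by blast
qed

lemma monomial_block_reduction:
  assumes A: "A \<in> carrier_mat n n" "invertible_mat A" "row_monomial A"
    and B: "B \<in> carrier_mat m m" "invertible_mat B" "col_monomial B"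
    and C: "C \<in> carrier_mat n m"
  obtains P Q where "P \<in> GL_int v (n + m)" "Q \<in> GL_int v (n + m)"
    "four_block_mat A C (0\<^sub>m m n) B
       = P * four_block_mat (mat_diag n (row_entry A)) C (0\<^sub>m m n) (mat_diag m (col_entry B)) * Q"
proof -
  obtain p where p: "p permutes {..<n}" "A = mat_diag n (row_entry A) * perm_mat n p"
    using row_monomial_factorization[OF A(1,3)] invertible_mat_col_nonzero[OF A(1,2)] by blast
  obtain q where q: "q permutes {..<m}" "B = perm_mat m q * mat_diag m (col_entry B)"
    using col_monomial_factorization[OF B(1,3)] invertible_mat_row_nonzero[OF B(1,2)] by blast
  let ?P = "four_block_mat (1\<^sub>m n) (0\<^sub>m n m) (0\<^sub>m m n) (perm_mat m q)"
  let ?Q = "four_block_mat (perm_mat n p) (0\<^sub>m n m) (0\<^sub>m m n) (1\<^sub>m m)"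
  have "?P \<in> GL_int v (n + m)" "?Q \<in> GL_int v (n + m)"
    using p(1) q(1) by (simp_all add: block_diag_GL_int one_mat_GL_int perm_mat_GL_int)
  moreover have "four_block_mat A C (0\<^sub>m m n) B
      = ?P * four_block_mat (mat_diag n (row_entry A)) C (0\<^sub>m m n) (mat_diag m (col_entry B)) * ?Q"
    unfolding block_diag_mult_upper_block[OF perm_mat_carrier perm_mat_carrier mat_diag_dim C mat_diag_dim]
    using p(2) q(2) by simp
  ultimately show ?thesis using that by blast
qed

lemma corner_decomposition:
  assumes C: "C \<in> carrier_mat n m"
    and a: "\<And>i. i < n \<Longrightarrow> a i \<noteq> 0" and b: "\<And>j. j < m \<Longrightarrow> b j \<noteq> 0"
    and bound: "\<And>i j. i < n \<Longrightarrow> j < m \<Longrightarrow> C $$ (i, j) \<noteq> 0 \<Longrightarrow>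
      min (v (a i)) (v (b j)) \<le> v (C $$ (i, j))"
  obtains X Y where "X \<in> carrier_mat n m" "Y \<in> carrier_mat n m"
    "integral_mat v X" "integral_mat v Y" "C = mat_diag n a * Y + X * mat_diag m b"
proof
  define P where "P i j \<longleftrightarrow> C $$ (i, j) \<noteq> 0 \<and> v (a i) \<le> v (C $$ (i, j))" for i j
  define Y where "Y = mat n m (\<lambda>(i, j). if P i j then C $$ (i, j) / a i else 0)"
  define X where "X = mat n m (\<lambda>(i, j). if P i j then 0 else C $$ (i, j) / b j)"
  show "X \<in> carrier_mat n m" "Y \<in> carrier_mat n m" by (simp_all add: X_def Y_def)
  show "integral_mat v Y"
    using a by (auto simp: integral_mat_def integral_def Y_def P_def v_divide)
  show "integral_mat v X"
    unfolding integral_mat_def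
  proof (intro allI impI)
    fix i j assume "i < dim_row X" "j < dim_col X"
    then have ij: "i < n" "j < m" by (simp_all add: X_def)
    show "integral v (X $$ (i, j))"
    proof (cases "P i j \<or> C $$ (i, j) = 0")
      case False
      then have "v (b j) \<le> v (C $$ (i, j))"
        using bound[OF ij] unfolding P_def by linarith
      then show ?thesis
        using False ij b[OF ij(2)] by (simp add: X_def integral_def v_divide)
    qed (use ij in \<open>auto simp: X_def\<close>)
  qed
  show "C = mat_diag n a * Y + X * mat_diag m b"
    unfolding mat_diag_mult_left[OF \<open>Y \<in> carrier_mat n m\<close>]
      mat_diag_mult_right[OF \<open>X \<in> carrier_mat n m\<close>]
    using C a b by (intro eq_matI) (auto simp: X_def Y_def)
qed

lemma corner_block_mem_double_coset:
  assumes C: "C \<in> carrier_mat n m"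
    and a: "\<And>i. i < n \<Longrightarrow> a i \<noteq> 0" and b: "\<And>j. j < m \<Longrightarrow> b j \<noteq> 0"
    and bound: "\<And>i j. i < n \<Longrightarrow> j < m \<Longrightarrow> C $$ (i, j) \<noteq> 0 \<Longrightarrow>
      min (v (a i)) (v (b j)) \<le> v (C $$ (i, j))"
  shows "four_block_mat (mat_diag n a) C (0\<^sub>m m n) (mat_diag m b)
    \<in> double_coset v t (map (\<lambda>i. v (a i)) [0..<n] @ map (\<lambda>j. v (b j)) [0..<m])"
proof -
  obtain X Y where XY: "X \<in> carrier_mat n m" "Y \<in> carrier_mat n m"
    "integral_mat v X" "integral_mat v Y" "C = mat_diag n a * Y + X * mat_diag m b"
    using corner_decomposition[OF C a b bound] by blast
  define x where "x l = (if l < n then a l else b (l - n))" for l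
  have "mat_diag (n + m) x \<in> double_coset v t (map (\<lambda>l. v (x l)) [0..<n + m])"
    using a b by (intro mat_diag_mem_double_coset) (simp add: x_def)
  also have "map (\<lambda>l. v (x l)) [0..<n + m] = map (\<lambda>i. v (a i)) [0..<n] @ map (\<lambda>j. v (b j)) [0..<m]"
    by (simp add: map_upt_add_eq_append x_def)
  finally have "four_block_mat (1\<^sub>m n) X (0\<^sub>m m n) (1\<^sub>m m) * mat_diag (n + m) x
      * four_block_mat (1\<^sub>m n) Y (0\<^sub>m m n) (1\<^sub>m m)
    \<in> double_coset v t (map (\<lambda>i. v (a i)) [0..<n] @ map (\<lambda>j. v (b j)) [0..<m])"
    using XY by (intro double_coset_mult) (auto intro: unipotent_GL_int)
  then show ?thesis
    unfolding x_def four_block_mat_diag[symmetric] unipotent_mult_block_diag[OF mat_diag_dim mat_diag_dim XY(1,2)]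
    using XY(5) by simp
qed

lemma det_valuation_lower_bound:
  assumes M: "M \<in> carrier_mat N N" and R: "R \<subseteq> {..<N}" and "det M \<noteq> 0"
    and rows_R: "\<And>r l. r \<in> R \<Longrightarrow> l < N \<Longrightarrow> M $$ (r, l) \<noteq> 0 \<Longrightarrow> w l \<le> v (M $$ (r, l))"
    and rows_integral: "\<And>r l. r < N \<Longrightarrow> r \<notin> R \<Longrightarrow> l < N \<Longrightarrow> integral v (M $$ (r, l))"
    and weight: "\<And>T. T \<subseteq> {..<N} \<Longrightarrow> card T = card R \<Longrightarrow> b \<le> (\<Sum>l\<in>T. w l)"
  shows "b \<le> v (det M)"
proof -
  have det: "det M = (\<Sum>p | p permutes {..<N}. signof p * (\<Prod>r<N. M $$ (r, p r)))"
    using det_def'[OF M] by (simp add: atLeast0LessThan)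
  show ?thesis
    unfolding det
  proof (rule v_sum_lower_bound)
    fix p assume "p \<in> {p. p permutes {..<N}}"
      and nonzero: "signof p * (\<Prod>r<N. M $$ (r, p r)) \<noteq> 0"
    then have p: "p permutes {..<N}" by simp
    have p_lt: "p r < N" if "r < N" for r using permutes_in_image[OF p] that by simp
    have entries: "M $$ (r, p r) \<noteq> 0" if "r < N" for r using nonzero that by auto
    have "(\<Prod>r<N. M $$ (r, p r)) \<noteq> 0" "(signof p :: 'a) \<noteq> 0"
      using entries by (auto simp: sign_def)
    then have "v (signof p * (\<Prod>r<N. M $$ (r, p r))) = v (\<Prod>r<N. M $$ (r, p r))"
      by (simp add: v_mult v_signof)
    also have "\<dots> = (\<Sum>r<N. v (M $$ (r, p r)))"
      using entries by (intro v_prod) auto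
    also have "b \<le> \<dots>"
    proof (rule permutation_sum_lower_bound[OF p R _ _ weight])
      show "w (p r) \<le> v (M $$ (r, p r))" if "r \<in> R" for r
        using that R rows_R p_lt entries by blast
      show "0 \<le> v (M $$ (r, p r))" if "r < N" "r \<notin> R" for r
        using that rows_integral p_lt entries by (auto simp: integral_def)
    qed
    finally show "b \<le> v (signof p * (\<Prod>r<N. M $$ (r, p r)))" .
  qed (use \<open>det M \<noteq> 0\<close> det in \<open>auto simp: finite_permutations\<close>)
qed

lemma double_coset_carrier:
  "G \<in> double_coset v t \<gamma> \<Longrightarrow> G \<in> carrier_mat (length \<gamma>) (length \<gamma>)"
  unfolding double_coset_def using GL_int_carrier by fastforce

lemma double_coset_cancel_right:
  assumes "G \<in> double_coset v t \<gamma>"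
  obtains k1 k2' where "k1 \<in> GL_int v (length \<gamma>)" "k2' \<in> GL_int v (length \<gamma>)"
    "G * k2' = k1 * diag_pow t \<gamma>"
proof -
  let ?N = "length \<gamma>" and ?D = "diag_pow t \<gamma>"
  obtain k1 k2 where k: "k1 \<in> GL_int v ?N" "k2 \<in> GL_int v ?N" "G = k1 * ?D * k2"
    using assms unfolding double_coset_def by blast
  obtain k2' where k2': "k2' \<in> GL_int v ?N" "k2 * k2' = 1\<^sub>m ?N"
    using GL_int_inverse[OF k(2)] by blast
  note carrier = GL_int_carrier[OF k(1)] GL_int_carrier[OF k(2)] GL_int_carrier[OF k2'(1)]
  have "G * k2' = k1 * ?D * (k2 * k2')"
    unfolding k(3) using carrier by (intro assoc_mult_mat[of _ ?N ?N]) auto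
  also have "\<dots> = k1 * ?D"
    using k2'(2) by (simp add: right_mult_one_mat[OF mult_carrier_mat[OF carrier(1) diag_pow_carrier]])
  finally show ?thesis using that k(1) k2'(1) by blast
qed

lemma double_coset_rows_det_bound:
  assumes G: "G \<in> double_coset v t \<gamma>"
    and H: "H \<in> carrier_mat (length \<gamma>) (length \<gamma>)" and R: "R \<subseteq> {..<length \<gamma>}"
    and "det H \<noteq> 0"
    and rows_R: "\<And>r c. r \<in> R \<Longrightarrow> c < length \<gamma> \<Longrightarrow> H $$ (r, c) = G $$ (r, c)"
    and rows_integral: "\<And>r c. r < length \<gamma> \<Longrightarrow> r \<notin> R \<Longrightarrow> c < length \<gamma> \<Longrightarrow> integral v (H $$ (r, c))"
    and weight: "\<And>T. T \<subseteq> {..<length \<gamma>} \<Longrightarrow> card T = card R \<Longrightarrow> b \<le> (\<Sum>l\<in>T. \<gamma> ! l)"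
  shows "b \<le> v (det H)"
proof -
  let ?N = "length \<gamma>"
  obtain k1 k2' where k: "k1 \<in> GL_int v ?N" "k2' \<in> GL_int v ?N" "G * k2' = k1 * diag_pow t \<gamma>"
    using double_coset_cancel_right[OF G] .
  note carrier = GL_int_carrier[OF k(1)] GL_int_carrier[OF k(2)]
  define M where "M = H * k2'"
  have M: "M \<in> carrier_mat ?N ?N" using H carrier by (simp add: M_def)
  have M_R: "M $$ (r, l) = k1 $$ (r, l) * t powi (\<gamma> ! l)" if "r \<in> R" "l < ?N" for r l
  proof -
    have "M $$ (r, l) = (G * k2') $$ (r, l)"
      unfolding M_def using that R H carrier rows_R double_coset_carrier[OF G]
      by (intro index_mult_mat_row_cong[of _ ?N ?N]) auto
    then show ?thesis
      using k(3) that subsetD[OF R that(1)] carrier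
      by (simp add: diag_pow_mat_diag mat_diag_mult_right[OF carrier(1)])
  qed
  have "det M \<noteq> 0" "v (det M) = v (det H)"
    using det_mult[OF H carrier(2)] GL_int_det[OF k(2)] \<open>det H \<noteq> 0\<close>
    by (simp_all add: M_def v_mult)
  moreover have "b \<le> v (det M)"
  proof (rule det_valuation_lower_bound[OF M R \<open>det M \<noteq> 0\<close> _ _ weight])
    show "\<gamma> ! l \<le> v (M $$ (r, l))" if "r \<in> R" "l < ?N" "M $$ (r, l) \<noteq> 0" for r l
      using that GL_int_integral[OF k(1)] carrier subsetD[OF R that(1)]
      by (auto simp: M_R v_mult t_nonzero v_power_int integral_mat_def integral_def)
    show "integral v (M $$ (r, l))" if "r < ?N" "r \<notin> R" "l < ?N" for r l
      unfolding M_def index_mult_mat_sum[OF H carrier(2) that(1,3)]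
      using that carrier rows_integral GL_int_integral[OF k(2)]
      by (auto simp: integral_mat_def intro!: integral_sum integral_mult)
  qed
  ultimately show ?thesis by simp
qed

end

section \<open>A minor violating the bound\<close>

text \<open>
  Right multiplication by \<open>U\<close> clears the entries of \<open>C\<close> in the rows in \<open>low\<close>, and the
  transposition matrix \<open>P\<close> then moves \<open>C $$ (i, j)\<close> to position \<open>(i, i)\<close>. Hence \<open>T = H U P\<close>
  is upper triangular, with diagonal entries \<open>C $$ (i, j)\<close> at \<open>i\<close>, \<open>diag_entry l\<close> for \<open>l \<in> low\<close>,
  and \<open>1\<close> in the rows that \<open>H\<close> takes from \<open>P\<close>.
\<close>

locale corner_entry = normalized_discrete_valuation +
  fixes n m :: nat and a b :: "nat \<Rightarrow> 'a::field" and C :: "'a mat" and i j :: nat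
  assumes C_carrier: "C \<in> carrier_mat n m"
    and a_nonzero: "\<And>k. k < n \<Longrightarrow> a k \<noteq> 0" and b_nonzero: "\<And>l. l < m \<Longrightarrow> b l \<noteq> 0"
    and i: "i < n" and j: "j < m" and entry_nonzero: "C $$ (i, j) \<noteq> 0"
    and entry_below_a: "v (C $$ (i, j)) < v (a i)" and entry_below_b: "v (C $$ (i, j)) < v (b j)"
begin

abbreviation \<mu> :: int where "\<mu> \<equiv> v (C $$ (i, j))"

definition G :: "'a mat" where
  "G = four_block_mat (mat_diag n a) C (0\<^sub>m m n) (mat_diag m b)"

definition diag_entry :: "nat \<Rightarrow> 'a" where
  "diag_entry l = (if l < n then a l else b (l - n))"

definition low :: "nat set" where
  "low = {l. l < n + m \<and> v (diag_entry l) \<le> \<mu>}"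

definition kept :: "nat set" where
  "kept = insert i low"

definition clearing :: "'a mat" where
  "clearing = mat n m (\<lambda>(k, l). if v (a k) \<le> \<mu> then - C $$ (k, l) / a k else 0)"

definition U :: "'a mat" where
  "U = four_block_mat (1\<^sub>m n) clearing (0\<^sub>m m n) (1\<^sub>m m)"

definition swap :: "nat \<Rightarrow> nat" where
  "swap = Transposition.transpose i (n + j)"

definition P :: "'a mat" where
  "P = perm_mat (n + m) swap"

definition H :: "'a mat" where
  "H = mat (n + m) (n + m) (\<lambda>(r, c). if r \<in> kept then G $$ (r, c) else P $$ (r, c))"

definition T :: "'a mat" where
  "T = H * (U * P)"

lemma swap_permutes: "swap permutes {..<n + m}"
  unfolding swap_def using i j by (intro permutes_swap_id) auto

lemma i_notin_low: "i \<notin> low" and nj_notin_low: "n + j \<notin> low"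
  using i entry_below_a entry_below_b by (auto simp: low_def diag_entry_def)

lemma kept_subset: "kept \<subseteq> {..<n + m}"
  using i by (auto simp: kept_def low_def)

lemma card_kept: "card kept = card low + 1"
  using i_notin_low by (simp add: kept_def low_def)

lemma carriers: "G \<in> carrier_mat (n + m) (n + m)" "U \<in> carrier_mat (n + m) (n + m)"
    "P \<in> carrier_mat (n + m) (n + m)" "H \<in> carrier_mat (n + m) (n + m)"
  using C_carrier by (auto simp: G_def U_def P_def H_def clearing_def)

lemma GU_entry:
  assumes "r < n + m" "y < n + m"
  shows "(G * U) $$ (r, y) =
    (if y = r then diag_entry r else if r < n \<and> n \<le> y \<and> \<not> v (a r) \<le> \<mu> then C $$ (r, y - n) else 0)"
proof -
  have clearing: "clearing \<in> carrier_mat n m" by (simp add: clearing_def)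
  have "mat_diag n a * clearing + C = mat n m (\<lambda>(k, l). if v (a k) \<le> \<mu> then 0 else C $$ (k, l))"
    unfolding mat_diag_mult_left[OF clearing]
    using C_carrier a_nonzero by (intro eq_matI) (auto simp: clearing_def)
  then have "G * U = four_block_mat (mat_diag n a)
      (mat n m (\<lambda>(k, l). if v (a k) \<le> \<mu> then 0 else C $$ (k, l))) (0\<^sub>m m n) (mat_diag m b)"
    unfolding G_def U_def upper_block_mult_unipotent[OF mat_diag_dim C_carrier mat_diag_dim clearing]
    by simp
  then show ?thesis
    using assms by (auto simp: diag_entry_def mat_diag_def)
qed

lemma U_unit_row:
  assumes "x < n + m" "y < n + m" and "x < n \<Longrightarrow> \<not> v (a x) \<le> \<mu>"
  shows "U $$ (x, y) = (if x = y then 1 else 0)"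
  using assms by (auto simp: U_def clearing_def)

lemma swap_outside_kept:
  assumes "r < n + m" "r \<notin> kept"
  shows "swap r < n + m" and "swap r < n \<Longrightarrow> \<not> v (a (swap r)) \<le> \<mu>"
proof -
  have "r \<noteq> i" "r \<notin> low" using assms(2) by (auto simp: kept_def)
  then show "swap r < n + m" "swap r < n \<Longrightarrow> \<not> v (a (swap r)) \<le> \<mu>"
    using assms(1) i j entry_below_a
    by (auto simp: swap_def low_def diag_entry_def transpose_def)
qed

lemma T_entry:
  assumes r: "r < n + m" and c: "c < n + m"
  shows "T $$ (r, c) = (if r \<in> kept then (G * U) $$ (r, swap c) else if r = c then 1 else 0)"
proof -
  have UP: "U * P \<in> carrier_mat (n + m) (n + m)" using carriers by simp
  have inv_swap: "Hilbert_Choice.inv swap = swap" by (simp add: swap_def)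
  show ?thesis
  proof (cases "r \<in> kept")
    case True
    have "T $$ (r, c) = (G * (U * P)) $$ (r, c)"
      unfolding T_def using carriers UP r c True
      by (intro index_mult_mat_row_cong) (auto simp: H_def)
    also have "G * (U * P) = G * U * P"
      using carriers by (simp add: assoc_mult_mat[of G "n + m" "n + m" U "n + m" P "n + m"])
    also have "(G * U * P) $$ (r, c) = (G * U) $$ (r, swap c)"
      unfolding P_def perm_mat_mult_right[OF swap_permutes mult_carrier_mat[OF carriers(1,2)]] inv_swap
      using r c by simp
    finally show ?thesis using True by simp
  next
    case False
    have "T $$ (r, c) = (P * (U * P)) $$ (r, c)"
      unfolding T_def using carriers UP r c False
      by (intro index_mult_mat_row_cong) (auto simp: H_def)
    also have "P * (U * P) = P * U * P"
      using carriers by (simp add: assoc_mult_mat[of P "n + m" "n + m" U "n + m" P "n + m"])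
    also have "(P * U * P) $$ (r, c) = U $$ (swap r, swap c)"
      unfolding P_def perm_mat_mult_left[OF swap_permutes carriers(2)]
        perm_mat_mult_right[OF swap_permutes mat_carrier] inv_swap
      using r c permutes_in_image[OF swap_permutes] by simp
    also have "\<dots> = (if r = c then 1 else 0)"
    proof -
      have "swap r = swap c \<longleftrightarrow> r = c" by (metis swap_def transpose_involutory)
      moreover have "swap c < n + m" using permutes_in_image[OF swap_permutes] c by simp
      ultimately show ?thesis
        using U_unit_row[OF swap_outside_kept(1)[OF r False]] swap_outside_kept(2)[OF r False]
        by simp
    qed
    finally show ?thesis using False by simp
  qed
qed

lemma T_low_row:
  assumes r: "r \<in> low" and c: "c < n + m"
  shows "T $$ (r, c) = (if c = r then diag_entry r else 0)"
proof -
  have "r < n + m" "v (diag_entry r) \<le> \<mu>" "r \<noteq> i" "r \<noteq> n + j"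
    using r i_notin_low nj_notin_low by (auto simp: low_def)
  moreover have "swap c = r \<longleftrightarrow> c = r"
    using calculation by (auto simp: swap_def transpose_def)
  moreover have "swap c < n + m" using permutes_in_image[OF swap_permutes] c by simp
  ultimately show ?thesis
    using c by (auto simp: T_entry GU_entry kept_def r diag_entry_def)
qed

lemma T_i_row:
  assumes "c \<le> i"
  shows "T $$ (i, c) = (if c = i then C $$ (i, j) else 0)"
proof -
  have "c < n + m" "swap c = (if c = i then n + j else c)" "n + j < n + m"
    using assms i j by (auto simp: swap_def)
  then show ?thesis
    using assms i entry_below_a by (auto simp: T_entry GU_entry kept_def diag_entry_def)
qed

lemma T_other_row:
  assumes "r < n + m" "r \<notin> kept" "c < n + m"
  shows "T $$ (r, c) = (if c = r then 1 else 0)"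
  using assms by (auto simp: T_entry)

lemma det_T: "det T = C $$ (i, j) * (\<Prod>l\<in>low. diag_entry l)"
proof -
  have T: "T \<in> carrier_mat (n + m) (n + m)" using carriers by (simp add: T_def)
  have "upper_triangular T"
  proof (rule upper_triangularI)
    fix r c assume "c < r" "r < dim_row T"
    then show "T $$ (r, c) = 0"
      using T T_low_row T_i_row T_other_row unfolding kept_def
      by (cases "r = i"; cases "r \<in> low") auto
  qed
  then have "det T = (\<Prod>r<n + m. T $$ (r, r))"
    using T by (simp add: det_upper_triangular prod_list_diag_prod atLeast0LessThan)
  also have "\<dots> = (\<Prod>r\<in>kept. T $$ (r, r))"
    using kept_subset T_other_row by (intro prod.mono_neutral_right) auto
  also have "\<dots> = C $$ (i, j) * (\<Prod>l\<in>low. diag_entry l)"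
    using i_notin_low T_low_row T_i_row kept_subset
    by (simp add: kept_def low_def)
  finally show ?thesis .
qed

lemma det_H: "det H \<noteq> 0" "v (det H) = \<mu> + (\<Sum>l\<in>low. v (diag_entry l))"
proof -
  have clearing: "clearing \<in> carrier_mat n m" by (simp add: clearing_def)
  have "det U = 1"
    unfolding U_def det_four_block_mat_lower_left_zero[OF one_carrier_mat clearing refl one_carrier_mat]
    by simp
  moreover have "det P = - 1"
    using det_perm_mat[OF swap_permutes] i by (simp add: P_def swap_def sign_swap_id)
  ultimately have "det T = - det H"
    using carriers by (simp add: T_def det_mult[of _ "n + m"])
  moreover have nonzero: "diag_entry l \<noteq> 0" if "l \<in> low" for l
    using that a_nonzero b_nonzero by (auto simp: low_def diag_entry_def)
  moreover have "finite low" by (simp add: low_def)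
  ultimately have "det H = - (C $$ (i, j) * (\<Prod>l\<in>low. diag_entry l))"
    and "(\<Prod>l\<in>low. diag_entry l) \<noteq> 0"
    using det_T by auto
  then show "det H \<noteq> 0" "v (det H) = \<mu> + (\<Sum>l\<in>low. v (diag_entry l))"
    using entry_nonzero nonzero \<open>finite low\<close> by (simp_all add: v_uminus v_mult v_prod)
qed

lemma H_rows:
  shows "\<And>r c. r \<in> kept \<Longrightarrow> c < n + m \<Longrightarrow> H $$ (r, c) = G $$ (r, c)"
    and "\<And>r c. r < n + m \<Longrightarrow> r \<notin> kept \<Longrightarrow> c < n + m \<Longrightarrow> integral v (H $$ (r, c))"
  using kept_subset by (auto simp: H_def P_def perm_mat_def)

lemma G_notin_double_coset:
  "G \<notin> double_coset v t (map (\<lambda>k. v (a k)) [0..<n] @ map (\<lambda>l. v (b l)) [0..<m])"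
    (is "G \<notin> double_coset v t ?\<gamma>")
proof
  assume G: "G \<in> double_coset v t ?\<gamma>"
  have len: "length ?\<gamma> = n + m" by simp
  have nth: "?\<gamma> ! l = v (diag_entry l)" if "l < n + m" for l
    using that by (auto simp: nth_append diag_entry_def)
  have low_eq: "low = {l \<in> {..<n + m}. ?\<gamma> ! l \<le> \<mu>}"
    using nth by (auto simp: low_def)
  have "(\<Sum>l\<in>low. v (diag_entry l)) + \<mu> + 1 \<le> v (det H)"
  proof (rule double_coset_rows_det_bound[OF G _ _ det_H(1)], unfold len)
    show "H \<in> carrier_mat (n + m) (n + m)" "kept \<subseteq> {..<n + m}"
      using carriers kept_subset by simp_all
    fix T assume "T \<subseteq> {..<n + m}" "card T = card kept"
    then have "(\<Sum>l\<in>low. ?\<gamma> ! l) + \<mu> + 1 \<le> (\<Sum>l\<in>T. ?\<gamma> ! l)"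
      unfolding low_eq by (intro sum_threshold_bound) (simp_all add: card_kept low_eq)
    then show "(\<Sum>l\<in>low. v (diag_entry l)) + \<mu> + 1 \<le> (\<Sum>l\<in>T. ?\<gamma> ! l)"
      using nth by (simp add: low_def)
  qed (use H_rows in auto)
  then show False using det_H(2) by simp
qed

end

context normalized_discrete_valuation
begin

lemma corner_block_mem_double_coset_iff:
  assumes C: "C \<in> carrier_mat n m"
    and a: "\<And>i. i < n \<Longrightarrow> a i \<noteq> 0" and b: "\<And>j. j < m \<Longrightarrow> b j \<noteq> 0"
  shows "four_block_mat (mat_diag n a) C (0\<^sub>m m n) (mat_diag m b)
      \<in> double_coset v t (map (\<lambda>i. v (a i)) [0..<n] @ map (\<lambda>j. v (b j)) [0..<m])
    \<longleftrightarrow> (\<forall>i<n. \<forall>j<m. C $$ (i, j) \<noteq> 0 \<longrightarrow> min (v (a i)) (v (b j)) \<le> v (C $$ (i, j)))"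
proof
  assume G: "four_block_mat (mat_diag n a) C (0\<^sub>m m n) (mat_diag m b)
      \<in> double_coset v t (map (\<lambda>i. v (a i)) [0..<n] @ map (\<lambda>j. v (b j)) [0..<m])"
  show "\<forall>i<n. \<forall>j<m. C $$ (i, j) \<noteq> 0 \<longrightarrow> min (v (a i)) (v (b j)) \<le> v (C $$ (i, j))"
  proof (intro allI impI, rule ccontr)
    fix i j assume "i < n" "j < m" "C $$ (i, j) \<noteq> 0" "\<not> min (v (a i)) (v (b j)) \<le> v (C $$ (i, j))"
    then interpret corner_entry v t n m a b C i j
      using C a b by unfold_locales auto
    show False using G_notin_double_coset G by (simp add: G_def)
  qed
next
  assume "\<forall>i<n. \<forall>j<m. C $$ (i, j) \<noteq> 0 \<longrightarrow> min (v (a i)) (v (b j)) \<le> v (C $$ (i, j))"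
  then show "four_block_mat (mat_diag n a) C (0\<^sub>m m n) (mat_diag m b)
      \<in> double_coset v t (map (\<lambda>i. v (a i)) [0..<n] @ map (\<lambda>j. v (b j)) [0..<m])"
    by (intro corner_block_mem_double_coset[OF C a b]) auto
qed

end

theorem corollary2p2:
  fixes v :: "'a::field \<Rightarrow> int" and t :: 'a
    and A C B :: "'a mat" and n m :: nat
  assumes val: "normalized_dval v t"
    and A: "A \<in> carrier_mat n n" "invertible_mat A" "row_monomial A"
    and B: "B \<in> carrier_mat m m" "invertible_mat B" "col_monomial B"
    and C: "C \<in> carrier_mat n m"
  defines "g \<equiv> four_block_mat A C (0\<^sub>m m n) B"
    and "\<alpha> \<equiv> \<lambda>i. v (row_entry A i)"
    and "\<beta> \<equiv> \<lambda>j. v (col_entry B j)"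
  defines "\<gamma> \<equiv> sort (map \<alpha> [0..<n] @ map \<beta> [0..<m])"
  shows "(\<exists>k1 \<in> GL_int v (n + m). \<exists>k2 \<in> GL_int v (n + m). g = k1 * diag_pow t \<gamma> * k2)
     \<longleftrightarrow> (\<forall>i < n. \<forall>j < m. C $$ (i, j) \<noteq> 0 \<longrightarrow> v (C $$ (i, j)) \<ge> min (\<alpha> i) (\<beta> j))"
proof -
  interpret normalized_discrete_valuation v t by (rule normalized_discrete_valuation.intro[OF val])
  let ?G = "four_block_mat (mat_diag n (row_entry A)) C (0\<^sub>m m n) (mat_diag m (col_entry B))"
  obtain P Q where P: "P \<in> GL_int v (n + m)" and Q: "Q \<in> GL_int v (n + m)" and g: "g = P * ?G * Q"
    using monomial_block_reduction[OF A B C] unfolding g_def by blast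
  have G: "?G \<in> carrier_mat (n + m) (n + m)" using C by simp
  have "(\<exists>k1 \<in> GL_int v (n + m). \<exists>k2 \<in> GL_int v (n + m). g = k1 * diag_pow t \<gamma> * k2)
      \<longleftrightarrow> g \<in> double_coset v t \<gamma>"
    by (auto simp: double_coset_def \<gamma>_def)
  also have "\<dots> \<longleftrightarrow> ?G \<in> double_coset v t \<gamma>"
    using double_coset_mult_iff[of P \<gamma> Q ?G] P Q G g by (simp add: \<gamma>_def)
  also have "\<dots> \<longleftrightarrow> ?G \<in> double_coset v t (map \<alpha> [0..<n] @ map \<beta> [0..<m])"
    unfolding \<gamma>_def by (subst double_coset_mset_eq[OF mset_sort]) (rule refl)
  also have "\<dots> \<longleftrightarrow> (\<forall>i < n. \<forall>j < m. C $$ (i, j) \<noteq> 0 \<longrightarrow> v (C $$ (i, j)) \<ge> min (\<alpha> i) (\<beta> j))"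
    unfolding \<alpha>_def \<beta>_def
    using corner_block_mem_double_coset_iff[OF C] row_entry_nonzero[OF A(3)] col_entry_nonzero[OF B(3)] A(1) B(1)
    by simp
  finally show ?thesis .
qed

end
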